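(* Let $F$ be the standard normal distribution, $N\ge K+2$, $K\ge1$, and $Y_1,\dots,Y_N$ i.i.d. standard normal (indices modulo $N$). Define $t:=N^{-1/2}\sum_{j=1}^NY_j$ and $$X_j:=\frac{\sum_{i=j}^{j+K}Y_i-\frac{K+1}{\sqrt N}\,t}{\sqrt{K+1}},\qquad 1\le j\le N .$$ Let $G_2$ be the event $\{\max_{1\le j\le N}|X_j|\le1\}$. Then $\log\mathbb P(G_2)\ge-\frac{\pi^2}{2}\frac NK$. *)

theory Defs
  imports "HOL-Probability.Probability"
begin

text \<open>Joint law of N i.i.d. standard normal variables Y_0, ..., Y_(N-1)
  (0-based indices); the coordinate omega i plays the role of Y_(i+1).\<close>
definition iid_std_normal :: "nat \<Rightarrow> (nat \<Rightarrow> real) measure" where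
  "iid_std_normal N = PiM {..<N} (\<lambda>_. density lborel std_normal_density)"

definition t_stat :: "nat \<Rightarrow> (nat \<Rightarrow> real) \<Rightarrow> real" where
  "t_stat N Y = (\<Sum>j<N. Y j) / sqrt (real N)"

text \<open>X_j with indices taken modulo N (0-based j).\<close>
definition X_var :: "nat \<Rightarrow> nat \<Rightarrow> (nat \<Rightarrow> real) \<Rightarrow> nat \<Rightarrow> real" where
  "X_var N K Y j = ((\<Sum>i=j..j+K. Y (i mod N)) - (real K + 1) / sqrt (real N) * t_stat N Y)
                   / sqrt (real K + 1)"

definition G2_event :: "nat \<Rightarrow> nat \<Rightarrow> (nat \<Rightarrow> real) set" where
  "G2_event N K = {Y \<in> space (iid_std_normal N). \<forall>j<N. \<bar>X_var N K Y j\<bar> \<le> 1}"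

end

theory Submission
  imports Defs
begin

text \<open>Write \<open>S\<^sub>k\<close> for the partial sums of the \<open>Y\<^sub>i\<close> and \<open>B\<^sub>k = S\<^sub>k - (k/N) S\<^sub>N\<close> for the discrete
  bridge. Every centred window sum in \<open>X\<^sub>j\<close> is an increment \<open>B\<^sub>p - B\<^sub>q\<close>, so \<open>G\<^sub>2\<close> contains the
  event that \<open>|B\<^sub>k| \<le> a\<close> for all \<open>k\<close>, where \<open>a = \<surd>(K+1)/2\<close>. Integrating out the total \<open>S\<^sub>N\<close> and
  removing the resulting drift by exponential tilting, this event has probability \<open>\<surd>(2\<pi>N)\<close> times
  the density of returning to \<open>0\<close> after \<open>N\<close> steps of the Gaussian walk killed outside \<open>[-a, a]\<close>.
  The killed kernel \<open>P\<^sub>s\<close> with steps of variance \<open>s\<^sup>2\<close> is symmetric, and the half-period cosine \<open>g\<close>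
  on \<open>[-a, a]\<close> satisfies \<open>P\<^sub>s g \<ge> exp (-\<pi>\<^sup>2 s\<^sup>2 / (8 a\<^sup>2)) g\<close>, because the parts of its Gaussian
  integral outside \<open>[-a, a]\<close> are nonpositive. Writing the return density as a squared norm and applying
  Cauchy--Schwarz against the cosine gives the lower bound
  \<open>exp (-\<pi>\<^sup>2 N / (8 a\<^sup>2)) / (2 a) = exp (-\<pi>\<^sup>2 N / (2 (K+1))) / \<surd>(K+1)\<close>.\<close>

section \<open>Gaussian transform of the half-period cosine\<close>

lemma integral_std_normal_cos_sin:
  fixes t :: real
  shows "(LINT y|lborel. std_normal_density y * cos (t * y)) = exp (- t\<^sup>2 / 2)"
    and "(LINT y|lborel. std_normal_density y * sin (t * y)) = 0"
proof -
  let ?\<Phi> = "density lborel std_normal_density"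
  interpret prob_space ?\<Phi>
    by (rule prob_space_normal_density) simp
  have int: "integrable ?\<Phi> (\<lambda>x. iexp (t * x))"
    by (rule integrable_iexp) auto
  have "char std_normal_distribution t = exp (- t\<^sup>2 / 2)"
    by (simp add: char_std_normal_distribution)
  then have char: "(CLINT x|?\<Phi>. iexp (t * x)) = exp (- t\<^sup>2 / 2)"
    by (simp add: char_def)
  have "Re (CLINT x|?\<Phi>. iexp (t * x)) = (LINT x|?\<Phi>. cos (t * x))"
    by (subst integral_Re[OF int, symmetric]) (simp add: Re_exp)
  then have "(LINT x|?\<Phi>. cos (t * x)) = exp (- t\<^sup>2 / 2)"
    by (metis char Re_complex_of_real)
  then show "(LINT y|lborel. std_normal_density y * cos (t * y)) = exp (- t\<^sup>2 / 2)"
    by (subst (asm) integral_density) auto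
  have "Im (CLINT x|?\<Phi>. iexp (t * x)) = (LINT x|?\<Phi>. sin (t * x))"
    by (subst integral_Im[OF int, symmetric]) (simp add: Im_exp)
  then have "(LINT x|?\<Phi>. sin (t * x)) = 0"
    by (metis char Im_complex_of_real)
  then show "(LINT y|lborel. std_normal_density y * sin (t * y)) = 0"
    by (subst (asm) integral_density) auto
qed

lemma integrable_normal_density_mult_bounded:
  fixes f :: "real \<Rightarrow> real"
  assumes [measurable]: "f \<in> borel_measurable borel" and "\<And>z. \<bar>f z\<bar> \<le> 1" and "0 < s"
  shows "integrable lborel (\<lambda>z. normal_density x s z * f z)"
proof (rule Bochner_Integration.integrable_bound)
  show "integrable lborel (normal_density x s)"
    using assms(3) by simp
  show "AE z in lborel. norm (normal_density x s z * f z) \<le> norm (normal_density x s z)"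
    using assms(2) by (auto simp: abs_mult intro!: mult_left_le)
qed auto

lemma integral_normal_density_cos:
  fixes x s w :: real
  assumes s: "0 < s"
  shows "(LINT z|lborel. normal_density x s z * cos (w * z)) = exp (- (w * s)\<^sup>2 / 2) * cos (w * x)"
proof -
  have dens: "\<And>y. normal_density x s (x + s * y) = std_normal_density y / s"
    using s by (simp add: normal_density_def power_mult_distrib real_sqrt_mult field_simps)
  have "(LINT z|lborel. normal_density x s z * cos (w * z))
      = \<bar>s\<bar> *\<^sub>R (LINT y|lborel. normal_density x s (x + s * y) * cos (w * (x + s * y)))"
    using s by (intro lborel_integral_real_affine) simp
  also have "\<dots> = (LINT y|lborel. cos (w * x) * (std_normal_density y * cos ((w * s) * y))
                    - sin (w * x) * (std_normal_density y * sin ((w * s) * y)))"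
    using dens s by (simp add: cos_add distrib_left algebra_simps flip: integral_mult_right_zero)
  also have "\<dots> = cos (w * x) * exp (- (w * s)\<^sup>2 / 2) - sin (w * x) * 0"
    by (subst Bochner_Integration.integral_diff)
      (auto intro!: integrable_normal_density_mult_bounded
        simp: integral_std_normal_cos_sin)
  finally show ?thesis
    by simp
qed

lemma has_real_derivative_normal_density:
  assumes "0 < s"
  shows "(normal_density x s has_real_derivative normal_density x s z * (- (z - x) / s\<^sup>2)) (at z within S)"
proof -
  define C where "C = 1 / sqrt (2 * pi * s\<^sup>2)"
  have "normal_density x s = (\<lambda>z. C * exp (- (z - x)\<^sup>2 / (2 * s\<^sup>2)))"
    by (simp add: normal_density_def C_def fun_eq_iff)
  moreover have "((\<lambda>z. C * exp (- (z - x)\<^sup>2 / (2 * s\<^sup>2))) has_real_derivative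
      C * (exp (- (z - x)\<^sup>2 / (2 * s\<^sup>2)) * (- (z - x) / s\<^sup>2))) (at z within S)"
    using assms by (auto intro!: derivative_eq_intros simp: power2_eq_square field_simps)
  ultimately show ?thesis
    by (simp add: ac_simps)
qed

lemma integral_mult_deriv_nonpos_by_parts:
  fixes H h \<rho> \<rho>' :: "real \<Rightarrow> real"
  assumes "a \<le> b"
    and H: "\<And>z. (H has_real_derivative h z) (at z within {a..b})"
    and \<rho>: "\<And>z. (\<rho> has_real_derivative \<rho>' z) (at z within {a..b})"
    and int: "(\<lambda>z. \<rho> z * h z) integrable_on {a..b}" "(\<lambda>z. H z * \<rho>' z) integrable_on {a..b}"
    and "H a = 0" and H_nonpos: "\<And>z. z \<in> {a..b} \<Longrightarrow> H z \<le> 0"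
    and "0 \<le> \<rho> b" and \<rho>'_nonpos: "\<And>z. z \<in> {a..b} \<Longrightarrow> \<rho>' z \<le> 0"
  shows "integral {a..b} (\<lambda>z. \<rho> z * h z) \<le> 0"
proof -
  have "((\<lambda>z. \<rho> z * h z + H z * \<rho>' z) has_integral (H b * \<rho> b - H a * \<rho> a)) {a..b}"
    using DERIV_mult[OF H \<rho>] \<open>a \<le> b\<close>
    by (intro fundamental_theorem_of_calculus)
      (auto simp: has_real_derivative_iff_has_vector_derivative[symmetric] algebra_simps)
  then have "integral {a..b} (\<lambda>z. \<rho> z * h z) = H b * \<rho> b - integral {a..b} (\<lambda>z. H z * \<rho>' z)"
    using integral_add[OF int] \<open>H a = 0\<close> by (simp add: integral_unique)
  moreover have "0 \<le> integral {a..b} (\<lambda>z. H z * \<rho>' z)"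
    using H_nonpos \<rho>'_nonpos by (intro integral_nonneg int(2) mult_nonpos_nonpos)
  moreover have "H b * \<rho> b \<le> 0"
    using H_nonpos[of b] \<open>a \<le> b\<close> \<open>0 \<le> \<rho> b\<close> by (simp add: mult_nonpos_nonneg)
  ultimately show ?thesis
    by simp
qed

text \<open>The antiderivative \<open>(sin (w z) - 1) / w\<close> of the cosine is \<open>\<le> 0\<close> and vanishes at \<open>a\<close>, and the
  density decreases to the right of its mean \<open>x \<le> a\<close>.\<close>

lemma integral_normal_density_cos_Icc_right_nonpos:
  fixes a b x s :: real
  assumes a: "0 < a" and "x \<le> a" and "a \<le> b" and s: "0 < s"
  shows "integral {a..b} (\<lambda>z. normal_density x s z * cos (pi / (2 * a) * z)) \<le> 0"
proof -
  define w where "w = pi / (2 * a)"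
  have w: "0 < w"
    using a by (simp add: w_def)
  show ?thesis
    unfolding w_def[symmetric]
  proof (rule integral_mult_deriv_nonpos_by_parts[where H = "\<lambda>z. (sin (w * z) - 1) / w"])
    show "((\<lambda>z. (sin (w * z) - 1) / w) has_real_derivative cos (w * z)) (at z within {a..b})" for z
      using w by (auto intro!: derivative_eq_intros)
    show "(\<lambda>z. normal_density x s z * cos (w * z)) integrable_on {a..b}"
      unfolding normal_density_def using s by (intro integrable_continuous_interval continuous_intros) auto
    show "(\<lambda>z. (sin (w * z) - 1) / w * (normal_density x s z * (- (z - x) / s\<^sup>2))) integrable_on {a..b}"
      unfolding normal_density_def using w s by (intro integrable_continuous_interval continuous_intros) auto
    show "(sin (w * a) - 1) / w = 0"
      using a by (simp add: w_def)
    show "(sin (w * z) - 1) / w \<le> 0" for z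
      using w by (simp add: divide_nonpos_pos)
    show "normal_density x s z * (- (z - x) / s\<^sup>2) \<le> 0" if "z \<in> {a..b}" for z
      using that \<open>x \<le> a\<close> s by (auto intro!: mult_nonneg_nonpos divide_nonpos_pos)
  qed (use \<open>a \<le> b\<close> has_real_derivative_normal_density[OF s] in auto)
qed

lemma integral_normal_density_cos_right_tail_nonpos:
  fixes a x s :: real
  assumes a: "0 < a" and xa: "x \<le> a" and s: "0 < s"
  shows "(LINT z|lborel. indicator {a<..} z * (normal_density x s z * cos (pi / (2 * a) * z))) \<le> 0"
proof -
  define f where "f z = normal_density x s z * cos (pi / (2 * a) * z)" for z
  have [measurable]: "f \<in> borel_measurable borel"
    unfolding f_def by measurable
  have f: "integrable lborel f"
    unfolding f_def using s by (intro integrable_normal_density_mult_bounded) auto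
  have "set_integrable lborel {a..} f"
    unfolding set_integrable_def using f by (rule integrable_mult_indicator[rotated]) auto
  then have "((\<lambda>b. set_lebesgue_integral lborel {a..b} f) \<longlongrightarrow> set_lebesgue_integral lborel {a..} f) at_top"
    by (intro tendsto_set_lebesgue_integral_at_top) auto
  moreover have "\<forall>\<^sub>F b in at_top. set_lebesgue_integral lborel {a..b} f \<le> 0"
  proof (rule eventually_at_top_linorderI[of a])
    fix b assume "a \<le> b"
    have "set_integrable lborel {a..b} f"
      unfolding set_integrable_def using f by (rule integrable_mult_indicator[rotated]) auto
    then have "set_lebesgue_integral lborel {a..b} f = integral {a..b} f"
      by (rule set_borel_integral_eq_integral)
    also have "\<dots> \<le> 0"
      unfolding f_def using a xa \<open>a \<le> b\<close> s by (rule integral_normal_density_cos_Icc_right_nonpos)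
    finally show "set_lebesgue_integral lborel {a..b} f \<le> 0" .
  qed
  ultimately have "set_lebesgue_integral lborel {a..} f \<le> 0"
    by (rule tendsto_upperbound) simp
  moreover have "set_lebesgue_integral lborel {a..} f = (LINT z|lborel. indicator {a<..} z * f z)"
    unfolding set_lebesgue_integral_def
    using AE_lborel_singleton[of a] by (intro integral_cong_AE) (auto split: split_indicator)
  ultimately show ?thesis
    by (simp add: f_def)
qed

lemma integral_normal_density_cos_left_tail_nonpos:
  fixes a x s :: real
  assumes "0 < a" and "- a \<le> x" and "0 < s"
  shows "(LINT z|lborel. indicator {..<-a} z * (normal_density x s z * cos (pi / (2 * a) * z))) \<le> 0"
proof -
  have "(LINT z|lborel. indicator {..<-a} z * (normal_density x s z * cos (pi / (2 * a) * z)))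
     = \<bar>-1\<bar> *\<^sub>R (LINT y|lborel. indicator {..<-a} (0 + -1 * y)
          * (normal_density x s (0 + -1 * y) * cos (pi / (2 * a) * (0 + -1 * y))))"
    by (rule lborel_integral_real_affine) simp
  also have "\<dots> = (LINT y|lborel. indicator {a<..} y * (normal_density (- x) s y * cos (pi / (2 * a) * y)))"
    by (auto intro!: Bochner_Integration.integral_cong
        simp: normal_density_def power2_commute add.commute split: split_indicator)
  also have "\<dots> \<le> 0"
    using assms by (intro integral_normal_density_cos_right_tail_nonpos) auto
  finally show ?thesis .
qed

lemma integral_Icc_normal_density_cos_ge:
  fixes a x s :: real
  assumes "0 < a" and "\<bar>x\<bar> \<le> a" and s: "0 < s"
  shows "exp (- (pi / (2 * a) * s)\<^sup>2 / 2) * cos (pi / (2 * a) * x)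
    \<le> (LINT z|lborel. indicator {-a..a} z * (normal_density x s z * cos (pi / (2 * a) * z)))"
proof -
  define f where "f z = normal_density x s z * cos (pi / (2 * a) * z)" for z
  have f: "integrable lborel f"
    unfolding f_def using s by (intro integrable_normal_density_mult_bounded) auto
  have "(LINT z|lborel. f z) = (LINT z|lborel. indicator {..<-a} z * f z
      + indicator {-a..a} z * f z + indicator {a<..} z * f z)"
    using \<open>0 < a\<close> by (intro Bochner_Integration.integral_cong) (auto split: split_indicator)
  also have "\<dots> = (LINT z|lborel. indicator {..<-a} z * f z) + (LINT z|lborel. indicator {-a..a} z * f z)
      + (LINT z|lborel. indicator {a<..} z * f z)"
    using integrable_mult_indicator[OF _ f] by simp
  finally have split: "(LINT z|lborel. f z) = \<dots>" .
  moreover have "(LINT z|lborel. f z) = exp (- (pi / (2 * a) * s)\<^sup>2 / 2) * cos (pi / (2 * a) * x)"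
    unfolding f_def using s by (rule integral_normal_density_cos)
  moreover have "(LINT z|lborel. indicator {..<-a} z * f z) \<le> 0"
    unfolding f_def using assms by (intro integral_normal_density_cos_left_tail_nonpos) auto
  moreover have "(LINT z|lborel. indicator {a<..} z * f z) \<le> 0"
    unfolding f_def using assms by (intro integral_normal_density_cos_right_tail_nonpos) auto
  ultimately show ?thesis
    by (simp add: f_def)
qed

section \<open>Gaussian kernels killed outside an interval\<close>

definition killed_op :: "real \<Rightarrow> real \<Rightarrow> (real \<Rightarrow> ennreal) \<Rightarrow> real \<Rightarrow> ennreal" where
  "killed_op a s f x = (\<integral>\<^sup>+ z. indicator {-a..a} z * ennreal (normal_density x s z) * f z \<partial>lborel)"

text \<open>The principal Dirichlet eigenfunction of \<open>[-a, a]\<close>.\<close>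

definition cos_mode :: "real \<Rightarrow> real \<Rightarrow> ennreal" where
  "cos_mode a z = ennreal (indicator {-a..a} z * cos (pi / (2 * a) * z))"

definition inner_Icc :: "real \<Rightarrow> (real \<Rightarrow> ennreal) \<Rightarrow> (real \<Rightarrow> ennreal) \<Rightarrow> ennreal" where
  "inner_Icc a u v = (\<integral>\<^sup>+ x. indicator {-a..a} x * u x * v x \<partial>lborel)"

lemma borel_measurable_killed_op [measurable]:
  assumes [measurable]: "f \<in> borel_measurable borel"
  shows "killed_op a s f \<in> borel_measurable borel"
  unfolding killed_op_def normal_density_def by measurable

lemma borel_measurable_funpow_killed_op [measurable]:
  assumes [measurable]: "f \<in> borel_measurable borel"
  shows "(killed_op a s ^^ n) f \<in> borel_measurable borel"
  by (induction n) auto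

lemma borel_measurable_cos_mode [measurable]: "cos_mode a \<in> borel_measurable borel"
  unfolding cos_mode_def by measurable

lemma cos_mode_le_1: "cos_mode a z \<le> 1"
  unfolding cos_mode_def by (auto simp: indicator_def)

lemma killed_op_mono:
  assumes "\<And>z. f z \<le> g z"
  shows "killed_op a s f x \<le> killed_op a s g x"
  unfolding killed_op_def by (intro nn_integral_mono mult_left_mono assms) auto

lemma funpow_killed_op_mono:
  assumes "\<And>z. f z \<le> g z"
  shows "(killed_op a s ^^ n) f x \<le> (killed_op a s ^^ n) g x"
  using assms by (induction n arbitrary: x) (auto intro!: killed_op_mono)

lemma killed_op_cmult:
  assumes [measurable]: "f \<in> borel_measurable borel"
  shows "killed_op a s (\<lambda>z. c * f z) x = c * killed_op a s f x"
proof -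
  have "killed_op a s (\<lambda>z. c * f z) x
      = (\<integral>\<^sup>+ z. c * (indicator {-a..a} z * ennreal (normal_density x s z) * f z) \<partial>lborel)"
    unfolding killed_op_def by (intro nn_integral_cong) (simp add: ac_simps)
  also have "\<dots> = c * killed_op a s f x"
    unfolding killed_op_def normal_density_def by (rule nn_integral_cmult) measurable
  finally show ?thesis .
qed

lemma funpow_killed_op_cmult:
  assumes [measurable]: "f \<in> borel_measurable borel"
  shows "(killed_op a s ^^ n) (\<lambda>z. c * f z) x = c * (killed_op a s ^^ n) f x"
proof (induction n arbitrary: x)
  case (Suc n)
  then have "(killed_op a s ^^ n) (\<lambda>z. c * f z) = (\<lambda>z. c * (killed_op a s ^^ n) f z)"
    by blast
  then show ?case
    by (simp add: killed_op_cmult)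
qed simp

lemma killed_op_cos_mode_ge:
  assumes a: "0 < a" and s: "0 < s"
  shows "ennreal (exp (- (pi / (2 * a) * s)\<^sup>2 / 2)) * cos_mode a x \<le> killed_op a s (cos_mode a) x"
proof (cases "\<bar>x\<bar> \<le> a")
  case False
  then have "cos_mode a x = 0"
    by (auto simp: cos_mode_def indicator_def)
  then show ?thesis
    by simp
next
  case True
  define w where "w = pi / (2 * a)"
  have cos_nonneg: "0 \<le> cos (w * z)" if "z \<in> {-a..a}" for z
  proof -
    have "\<bar>w * z\<bar> \<le> pi / 2"
      using that a by (auto simp: w_def abs_mult field_simps)
    then show ?thesis
      by (intro cos_ge_zero) auto
  qed
  have "killed_op a s (cos_mode a) x
      = (\<integral>\<^sup>+ z. ennreal (indicator {-a..a} z * (normal_density x s z * cos (w * z))) \<partial>lborel)"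
    unfolding killed_op_def cos_mode_def w_def[symmetric]
    by (intro nn_integral_cong) (auto split: split_indicator simp: ennreal_mult'[symmetric] cos_nonneg)
  also have "\<dots> = ennreal (LINT z|lborel. indicator {-a..a} z * (normal_density x s z * cos (w * z)))"
  proof (rule nn_integral_eq_integral)
    show "integrable lborel (\<lambda>z. indicator {-a..a} z * (normal_density x s z * cos (w * z)))"
      using integrable_mult_indicator[OF _ integrable_normal_density_mult_bounded[OF _ _ s]] by simp
    show "AE z in lborel. 0 \<le> indicator {-a..a} z * (normal_density x s z * cos (w * z))"
      using cos_nonneg by (auto split: split_indicator)
  qed
  finally have "ennreal (exp (- (w * s)\<^sup>2 / 2) * cos (w * x)) \<le> killed_op a s (cos_mode a) x"
    using integral_Icc_normal_density_cos_ge[OF a True s] by (simp add: w_def ennreal_leI)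
  moreover have "cos_mode a x = ennreal (cos (w * x))"
    using True by (simp add: cos_mode_def w_def indicator_def abs_le_iff)
  ultimately show ?thesis
    using True cos_nonneg[of x] by (simp add: w_def ennreal_mult')
qed

lemma funpow_killed_op_cos_mode_ge:
  assumes "0 < a" and "0 < s"
  shows "ennreal (exp (- (pi / (2 * a) * s)\<^sup>2 / 2)) ^ n * cos_mode a x \<le> (killed_op a s ^^ n) (cos_mode a) x"
proof (induction n arbitrary: x)
  case (Suc n)
  let ?c = "ennreal (exp (- (pi / (2 * a) * s)\<^sup>2 / 2))"
  have "?c ^ Suc n * cos_mode a x = ?c ^ n * (?c * cos_mode a x)"
    by (simp add: ac_simps)
  also have "\<dots> \<le> ?c ^ n * killed_op a s (cos_mode a) x"
    using assms by (intro mult_left_mono killed_op_cos_mode_ge) auto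
  also have "\<dots> = killed_op a s (\<lambda>z. ?c ^ n * cos_mode a z) x"
    by (simp add: killed_op_cmult)
  also have "\<dots> \<le> killed_op a s ((killed_op a s ^^ n) (cos_mode a)) x"
    by (intro killed_op_mono Suc)
  finally show ?case
    by simp
qed simp

lemma normal_density_commute: "normal_density x s z = normal_density z s x"
  by (simp add: normal_density_def power2_commute)

lemma inner_Icc_commute: "inner_Icc a u v = inner_Icc a v u"
  unfolding inner_Icc_def by (simp add: ac_simps)

lemma inner_Icc_cmult_right:
  assumes [measurable]: "u \<in> borel_measurable borel" "v \<in> borel_measurable borel"
  shows "inner_Icc a u (\<lambda>z. c * v z) = c * inner_Icc a u v"
  unfolding inner_Icc_def by (subst nn_integral_cmult[symmetric]) (measurable, simp add: ac_simps)

lemma inner_Icc_mono_right: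
  assumes "\<And>z. v z \<le> v' z"
  shows "inner_Icc a u v \<le> inner_Icc a u v'"
  unfolding inner_Icc_def by (intro nn_integral_mono mult_left_mono assms) auto

lemma killed_op_at_0: "killed_op a s f 0 = inner_Icc a (\<lambda>z. ennreal (normal_density 0 s z)) f"
  unfolding killed_op_def inner_Icc_def by (simp add: ac_simps)

lemma inner_Icc_killed_op:
  assumes [measurable]: "u \<in> borel_measurable borel" "v \<in> borel_measurable borel"
  shows "inner_Icc a u (killed_op a s v) = (\<integral>\<^sup>+ x. \<integral>\<^sup>+ z.
    indicator {-a..a} x * indicator {-a..a} z * ennreal (normal_density x s z) * u x * v z \<partial>lborel \<partial>lborel)"
  unfolding inner_Icc_def killed_op_def
  by (intro nn_integral_cong, subst nn_integral_cmult[symmetric])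
    (unfold normal_density_def, measurable, simp add: ac_simps)

lemma inner_Icc_killed_op_commute:
  assumes [measurable]: "u \<in> borel_measurable borel" "v \<in> borel_measurable borel"
  shows "inner_Icc a u (killed_op a s v) = inner_Icc a (killed_op a s u) v"
proof -
  have "inner_Icc a u (killed_op a s v) = (\<integral>\<^sup>+ z. \<integral>\<^sup>+ x.
      indicator {-a..a} x * indicator {-a..a} z * ennreal (normal_density x s z) * u x * v z \<partial>lborel \<partial>lborel)"
    unfolding inner_Icc_killed_op[OF assms]
    by (rule lborel_pair.Fubini'[symmetric]) (unfold normal_density_def, measurable)
  also have "\<dots> = inner_Icc a v (killed_op a s u)"
    unfolding inner_Icc_killed_op[OF assms(2,1)]
    by (intro nn_integral_cong) (simp add: normal_density_commute[of _ s] ac_simps)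
  finally show ?thesis
    by (simp add: inner_Icc_commute)
qed

lemma inner_Icc_funpow_killed_op_commute:
  assumes [measurable]: "u \<in> borel_measurable borel" "v \<in> borel_measurable borel"
  shows "inner_Icc a u ((killed_op a s ^^ n) v) = inner_Icc a ((killed_op a s ^^ n) u) v"
  using assms(1)
proof (induction n arbitrary: u)
  case (Suc n)
  note [measurable] = Suc.prems
  have "inner_Icc a u ((killed_op a s ^^ Suc n) v) = inner_Icc a (killed_op a s u) ((killed_op a s ^^ n) v)"
    by (simp add: inner_Icc_killed_op_commute)
  also have "\<dots> = inner_Icc a ((killed_op a s ^^ Suc n) u) v"
    by (simp add: Suc.IH funpow_Suc_right del: funpow.simps)
  finally show ?case .
qed simp

lemma inner_Icc_Cauchy_Schwarz:
  assumes [measurable]: "u \<in> borel_measurable borel" "v \<in> borel_measurable borel"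
  shows "(inner_Icc a u v)\<^sup>2 \<le> inner_Icc a u u * inner_Icc a v v"
proof -
  have sq: "indicator {-a..a} x * f x * g x = (indicator {-a..a} x * f x) * (indicator {-a..a} x * g x)"
    for x and f g :: "real \<Rightarrow> ennreal"
    by (simp add: indicator_def)
  show ?thesis
    using Cauchy_Schwarz_nn_integral[of "\<lambda>x. indicator {-a..a} x * u x" lborel
        "\<lambda>x. indicator {-a..a} x * v x"]
    unfolding inner_Icc_def sq by (simp add: power2_eq_square)
qed

lemma inner_Icc_cos_mode_self_le:
  assumes "0 < a"
  shows "inner_Icc a (cos_mode a) (cos_mode a) \<le> ennreal (2 * a)"
proof -
  have "inner_Icc a (cos_mode a) (cos_mode a) \<le> (\<integral>\<^sup>+ x. indicator {-a..a} x \<partial>lborel)"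
    unfolding inner_Icc_def using cos_mode_le_1
    by (intro nn_integral_mono) (auto simp: indicator_def intro!: mult_le_one)
  also have "\<dots> = ennreal (2 * a)"
    using assms by simp
  finally show ?thesis .
qed

lemma inner_Icc_self_ge_of_cos_mode:
  assumes "0 < a" and [measurable]: "F \<in> borel_measurable borel" and "0 \<le> \<beta>"
    and \<beta>: "ennreal \<beta> \<le> inner_Icc a F (cos_mode a)"
  shows "ennreal (\<beta>\<^sup>2 / (2 * a)) \<le> inner_Icc a F F"
proof -
  have "ennreal (\<beta>\<^sup>2) = (ennreal \<beta>)\<^sup>2"
    using \<open>0 \<le> \<beta>\<close> by (simp add: ennreal_power)
  also have "\<dots> \<le> (inner_Icc a F (cos_mode a))\<^sup>2"
    using \<beta> by (intro power_mono) auto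
  also have "\<dots> \<le> inner_Icc a F F * inner_Icc a (cos_mode a) (cos_mode a)"
    by (rule inner_Icc_Cauchy_Schwarz) measurable
  also have "\<dots> \<le> inner_Icc a F F * ennreal (2 * a)"
    using \<open>0 < a\<close> by (intro mult_left_mono inner_Icc_cos_mode_self_le) auto
  finally have "ennreal (\<beta>\<^sup>2) / ennreal (2 * a) \<le> inner_Icc a F F"
    using \<open>0 < a\<close> by (intro divide_le_posI_ennreal) (auto simp: mult.commute)
  then show ?thesis
    using \<open>0 < a\<close> by (simp add: divide_ennreal)
qed

lemma nn_integral_normal_density_mult:
  assumes s: "0 < s" and t: "0 < t"
  shows "(\<integral>\<^sup>+ w. ennreal (normal_density x s w) * ennreal (normal_density w t z) \<partial>lborel)
    = ennreal (normal_density x (sqrt (s\<^sup>2 + t\<^sup>2)) z)"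
proof -
  have "(\<integral>\<^sup>+ w. ennreal (normal_density x s w) * ennreal (normal_density w t z) \<partial>lborel)
      = ennreal \<bar>1::real\<bar> * (\<integral>\<^sup>+ y. ennreal (normal_density x s (z + 1 * y))
          * ennreal (normal_density (z + 1 * y) t z) \<partial>lborel)"
    by (rule nn_integral_real_affine) (unfold normal_density_def, measurable)
  also have "\<dots> = (\<integral>\<^sup>+ y. ennreal (normal_density 0 s ((x - z) - y) * normal_density 0 t y) \<partial>lborel)"
  proof -
    have "normal_density x s (z + y) = normal_density 0 s ((x - z) - y)"
      and "normal_density (z + y) t z = normal_density 0 t y" for y
      by (simp_all add: normal_density_def power2_commute algebra_simps)
    then show ?thesis
      by (simp add: ennreal_mult)
  qed
  also have "\<dots> = ennreal (normal_density 0 (sqrt (s\<^sup>2 + t\<^sup>2)) (x - z))"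
    using fun_cong[OF conv_normal_density_zero_mean[OF s t], of "x - z"] by simp
  also have "normal_density 0 (sqrt (s\<^sup>2 + t\<^sup>2)) (x - z) = normal_density x (sqrt (s\<^sup>2 + t\<^sup>2)) z"
    by (simp add: normal_density_def power2_commute)
  finally show ?thesis .
qed

lemma killed_op_normal_density_le:
  assumes "0 < s" and "0 < t"
  shows "killed_op a s (\<lambda>w. ennreal (normal_density y t w)) x \<le> ennreal (normal_density x (sqrt (s\<^sup>2 + t\<^sup>2)) y)"
proof -
  have "killed_op a s (\<lambda>w. ennreal (normal_density y t w)) x
      \<le> (\<integral>\<^sup>+ w. ennreal (normal_density x s w) * ennreal (normal_density w t y) \<partial>lborel)"
    unfolding killed_op_def
    by (intro nn_integral_mono) (auto simp: indicator_def normal_density_commute[of y])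
  also have "\<dots> = ennreal (normal_density x (sqrt (s\<^sup>2 + t\<^sup>2)) y)"
    using assms by (rule nn_integral_normal_density_mult)
  finally show ?thesis .
qed

text \<open>Killing is a loss of mass, so the killed operators are dominated by the Gaussian semigroup.\<close>

lemma killed_op_killed_op_le:
  assumes "0 < s" and "0 < t" and [measurable]: "f \<in> borel_measurable borel"
  shows "killed_op a s (killed_op a t f) x \<le> killed_op a (sqrt (s\<^sup>2 + t\<^sup>2)) f x"
proof -
  let ?I = "\<lambda>x. indicator {-a..a} x :: ennreal"
  have "killed_op a s (killed_op a t f) x = (\<integral>\<^sup>+ w. \<integral>\<^sup>+ z.
      ?I w * ennreal (normal_density x s w) * (?I z * ennreal (normal_density w t z) * f z) \<partial>lborel \<partial>lborel)"
    unfolding killed_op_def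
    by (intro nn_integral_cong, subst nn_integral_cmult[symmetric]) (unfold normal_density_def, measurable)
  also have "\<dots> = (\<integral>\<^sup>+ z. \<integral>\<^sup>+ w.
      ?I w * ennreal (normal_density x s w) * (?I z * ennreal (normal_density w t z) * f z) \<partial>lborel \<partial>lborel)"
    by (rule lborel_pair.Fubini') (unfold normal_density_def, measurable)
  also have "\<dots> \<le> (\<integral>\<^sup>+ z. (\<integral>\<^sup>+ w. ennreal (normal_density x s w) * ennreal (normal_density w t z) \<partial>lborel)
      * (?I z * f z) \<partial>lborel)"
  proof (intro nn_integral_mono)
    fix z
    have "(\<integral>\<^sup>+ w. ?I w * ennreal (normal_density x s w) * (?I z * ennreal (normal_density w t z) * f z) \<partial>lborel)
        \<le> (\<integral>\<^sup>+ w. ennreal (normal_density x s w) * ennreal (normal_density w t z) * (?I z * f z) \<partial>lborel)"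
      by (intro nn_integral_mono) (auto simp: indicator_def ac_simps)
    also have "\<dots> = (\<integral>\<^sup>+ w. ennreal (normal_density x s w) * ennreal (normal_density w t z) \<partial>lborel) * (?I z * f z)"
      by (rule nn_integral_multc) (unfold normal_density_def, measurable)
    finally show "(\<integral>\<^sup>+ w. ?I w * ennreal (normal_density x s w) * (?I z * ennreal (normal_density w t z) * f z) \<partial>lborel)
        \<le> (\<integral>\<^sup>+ w. ennreal (normal_density x s w) * ennreal (normal_density w t z) \<partial>lborel) * (?I z * f z)" .
  qed
  also have "\<dots> = killed_op a (sqrt (s\<^sup>2 + t\<^sup>2)) f x"
    unfolding killed_op_def nn_integral_normal_density_mult[OF assms(1,2)]
    by (intro nn_integral_cong) (simp add: ac_simps)
  finally show ?thesis .
qed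

lemma funpow_killed_op_double_le:
  assumes "0 < s" and [measurable]: "f \<in> borel_measurable borel"
  shows "(killed_op a s ^^ (2 * n)) f x \<le> (killed_op a (sqrt (s\<^sup>2 + s\<^sup>2)) ^^ n) f x"
proof (induction n arbitrary: x)
  case (Suc n)
  have "(killed_op a s ^^ (2 * Suc n)) f x = killed_op a s (killed_op a s ((killed_op a s ^^ (2 * n)) f)) x"
    by simp
  also have "\<dots> \<le> killed_op a (sqrt (s\<^sup>2 + s\<^sup>2)) ((killed_op a s ^^ (2 * n)) f) x"
    using \<open>0 < s\<close> by (intro killed_op_killed_op_le) auto
  also have "\<dots> \<le> killed_op a (sqrt (s\<^sup>2 + s\<^sup>2)) ((killed_op a (sqrt (s\<^sup>2 + s\<^sup>2)) ^^ n) f) x"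
    by (intro killed_op_mono Suc.IH)
  finally show ?case
    by simp
qed simp

lemma inner_Icc_funpow_killed_op_cos_mode_ge:
  assumes a: "0 < a" and s: "0 < s"
  defines "\<psi> \<equiv> \<lambda>z. ennreal (normal_density 0 s z)"
  shows "ennreal (exp (- (pi / (2 * a) * s)\<^sup>2 / 2)) ^ Suc n
    \<le> inner_Icc a ((killed_op a s ^^ n) \<psi>) (cos_mode a)"
proof -
  let ?c = "ennreal (exp (- (pi / (2 * a) * s)\<^sup>2 / 2))"
  have [measurable]: "\<psi> \<in> borel_measurable borel"
    unfolding \<psi>_def by measurable
  have "?c ^ Suc n = ?c ^ n * (?c * cos_mode a 0)"
    using a by (simp add: cos_mode_def ac_simps)
  also have "\<dots> \<le> ?c ^ n * killed_op a s (cos_mode a) 0"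
    using a s by (intro mult_left_mono killed_op_cos_mode_ge) auto
  also have "\<dots> = inner_Icc a \<psi> (\<lambda>z. ?c ^ n * cos_mode a z)"
    by (simp add: killed_op_at_0 inner_Icc_cmult_right \<psi>_def)
  also have "\<dots> \<le> inner_Icc a \<psi> ((killed_op a s ^^ n) (cos_mode a))"
    using a s by (intro inner_Icc_mono_right funpow_killed_op_cos_mode_ge)
  also have "\<dots> = inner_Icc a ((killed_op a s ^^ n) \<psi>) (cos_mode a)"
    by (rule inner_Icc_funpow_killed_op_commute) measurable
  finally show ?thesis .
qed

text \<open>By symmetry, a return density of odd order is a squared norm, which Cauchy--Schwarz bounds
  from below through its overlap with the eigenfunction.\<close>

lemma funpow_killed_op_return_ge:
  assumes a: "0 < a" and s: "0 < s"
  defines "\<psi> \<equiv> \<lambda>z. ennreal (normal_density 0 s z)"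
  shows "ennreal ((exp (- (pi / (2 * a) * s)\<^sup>2 / 2) ^ Suc n)\<^sup>2 / (2 * a))
    \<le> (killed_op a s ^^ Suc (2 * n)) \<psi> 0"
proof -
  have [measurable]: "\<psi> \<in> borel_measurable borel"
    unfolding \<psi>_def by measurable
  have "(killed_op a s ^^ Suc (2 * n)) \<psi> 0 = inner_Icc a \<psi> ((killed_op a s ^^ n) ((killed_op a s ^^ n) \<psi>))"
    by (simp add: killed_op_at_0 \<psi>_def mult_2 funpow_add)
  also have "\<dots> = inner_Icc a ((killed_op a s ^^ n) \<psi>) ((killed_op a s ^^ n) \<psi>)"
    by (rule inner_Icc_funpow_killed_op_commute) measurable
  moreover have "ennreal ((exp (- (pi / (2 * a) * s)\<^sup>2 / 2) ^ Suc n)\<^sup>2 / (2 * a))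
      \<le> inner_Icc a ((killed_op a s ^^ n) \<psi>) ((killed_op a s ^^ n) \<psi>)"
    using inner_Icc_funpow_killed_op_cos_mode_ge[OF a s, of n]
    by (intro inner_Icc_self_ge_of_cos_mode a) (simp_all add: \<psi>_def ennreal_power ennreal_mult')
  ultimately show ?thesis
    by simp
qed

lemma funpow_killed_op_std_normal_ge:
  assumes a: "0 < a"
  shows "ennreal (exp (- (pi / (2 * a))\<^sup>2 / 2 * Suc n) / (2 * a))
    \<le> (killed_op a 1 ^^ n) (\<lambda>z. ennreal (std_normal_density z)) 0"
proof -
  \<comment> \<open>Splitting each step into two of variance \<open>1/2\<close> makes the order odd, whatever the parity of \<open>n\<close>.\<close>
  define s :: real where "s = sqrt (1 / 2)"
  have s: "0 < s" "sqrt (s\<^sup>2 + s\<^sup>2) = 1"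
    by (simp_all add: s_def)
  let ?\<psi> = "\<lambda>z. ennreal (normal_density 0 s z)"
  have "(pi / (2 * a) * s)\<^sup>2 = (pi / (2 * a))\<^sup>2 / 2"
    by (simp add: s_def power_mult_distrib power_divide)
  then have "(exp (- (pi / (2 * a) * s)\<^sup>2 / 2) ^ Suc n)\<^sup>2 = exp (real (Suc n * 2) * (- (pi / (2 * a))\<^sup>2 / 4))"
    by (simp only: exp_of_nat_mult power_mult) simp
  also have "\<dots> = exp (- (pi / (2 * a))\<^sup>2 / 2 * Suc n)"
    by (simp add: algebra_simps)
  finally have "ennreal (exp (- (pi / (2 * a))\<^sup>2 / 2 * Suc n) / (2 * a))
      \<le> (killed_op a s ^^ (2 * n)) (killed_op a s ?\<psi>) 0"
    using funpow_killed_op_return_ge[OF a s(1), of n] by (simp add: funpow_swap1)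
  also have "\<dots> \<le> (killed_op a 1 ^^ n) (killed_op a s ?\<psi>) 0"
    using funpow_killed_op_double_le[OF s(1)] s(2) by simp
  also have "\<dots> \<le> (killed_op a 1 ^^ n) (\<lambda>z. ennreal (std_normal_density z)) 0"
    using killed_op_normal_density_le[OF s(1) s(1), of a 0] s(2)
    by (intro funpow_killed_op_mono) (simp add: normal_density_commute[of _ 1])
  finally show ?thesis .
qed

section \<open>Random walks with standard normal steps\<close>

interpretation std_normal_product: product_sigma_finite "\<lambda>_::nat. std_normal_distribution"
  unfolding product_sigma_finite_def
  by (simp add: prob_space_imp_sigma_finite prob_space_normal_density)

lemma prob_space_iid_std_normal: "prob_space (iid_std_normal N)"
  unfolding iid_std_normal_def by (simp add: prob_space_PiM prob_space_normal_density)

lemma borel_measurable_iid_std_normal_component: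
  assumes "i < N"
  shows "(\<lambda>y. y i) \<in> borel_measurable (iid_std_normal N)"
  using measurable_component_singleton[of i "{..<N}" "\<lambda>_. std_normal_distribution"] assms
  by (simp add: iid_std_normal_def cong: measurable_cong_sets)

lemma borel_measurable_partial_sum:
  assumes "k \<le> N"
  shows "(\<lambda>y. \<Sum>i<k. y i) \<in> borel_measurable (iid_std_normal N)"
  using assms by (intro borel_measurable_sum borel_measurable_iid_std_normal_component) auto

lemma nn_integral_std_normal_translate:
  assumes [measurable]: "g \<in> borel_measurable borel"
  shows "(\<integral>\<^sup>+ t. g (u + t) \<partial>std_normal_distribution)
    = (\<integral>\<^sup>+ s. ennreal (std_normal_density (s - u)) * g s \<partial>lborel)"
proof -
  have "(\<integral>\<^sup>+ t. g (u + t) \<partial>std_normal_distribution) = (\<integral>\<^sup>+ t. ennreal (std_normal_density t) * g (u + t) \<partial>lborel)"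
    by (rule nn_integral_density) (unfold normal_density_def, measurable)
  also have "\<dots> = ennreal \<bar>1::real\<bar>
      * (\<integral>\<^sup>+ s. ennreal (std_normal_density (- u + 1 * s)) * g (u + (- u + 1 * s)) \<partial>lborel)"
    by (rule nn_integral_real_affine) (unfold normal_density_def, measurable)
  finally show ?thesis
    by simp
qed

lemma sum_lessThan_fun_upd:
  fixes k n :: nat
  assumes "k \<le> n"
  shows "(\<Sum>i<k. (x(n := t)) i) = (\<Sum>i<k. x i)"
  using assms by (auto intro!: sum.cong)

lemma nn_integral_iid_std_normal_insert:
  assumes "Q \<in> borel_measurable (iid_std_normal (Suc n))"
  shows "(\<integral>\<^sup>+ y. Q y \<partial>iid_std_normal (Suc n))
    = (\<integral>\<^sup>+ x. \<integral>\<^sup>+ t. Q (x(n := t)) \<partial>std_normal_distribution \<partial>iid_std_normal n)"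
  using assms unfolding iid_std_normal_def lessThan_Suc
  by (intro std_normal_product.product_nn_integral_insert) auto

definition drift_op :: "real \<Rightarrow> real \<Rightarrow> (real \<Rightarrow> ennreal) \<Rightarrow> real \<Rightarrow> ennreal" where
  "drift_op a c f x = (\<integral>\<^sup>+ t. indicator {-a..a} (x + t - c) * f (x + t - c) \<partial>std_normal_distribution)"

lemma borel_measurable_drift_op [measurable]:
  assumes [measurable]: "f \<in> borel_measurable borel"
  shows "drift_op a c f \<in> borel_measurable borel"
  unfolding drift_op_def by measurable

lemma borel_measurable_funpow_drift_op [measurable]:
  assumes [measurable]: "f \<in> borel_measurable borel"
  shows "(drift_op a c ^^ n) f \<in> borel_measurable borel"
  by (induction n) auto

lemma borel_measurable_killed_walk:
  assumes "f \<in> borel_measurable borel"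
  shows "(\<lambda>y. (\<Prod>k\<in>{1..n}. indicator {-a..a} ((\<Sum>i<k. y i) - real k * c)) * f ((\<Sum>i<n. y i) - real n * c) :: ennreal)
    \<in> borel_measurable (iid_std_normal n)"
proof -
  have S: "(\<lambda>y. (\<Sum>i<k. y i) - real k * c) \<in> borel_measurable (iid_std_normal n)" if "k \<le> n" for k
    using borel_measurable_partial_sum[OF that] by simp
  have "(\<lambda>y. indicator {-a..a} ((\<Sum>i<k. y i) - real k * c) :: ennreal) \<in> borel_measurable (iid_std_normal n)"
    if "k \<le> n" for k
    using measurable_compose[OF S[OF that] borel_measurable_indicator[of "{-a..a}"]] by (simp add: comp_def)
  moreover have "(\<lambda>y. f ((\<Sum>i<n. y i) - real n * c)) \<in> borel_measurable (iid_std_normal n)"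
    using measurable_compose[OF S[OF order.refl] assms] by (simp only: comp_def)
  ultimately show ?thesis
    by (intro borel_measurable_times_ennreal borel_measurable_prod_ennreal) auto
qed

lemma nn_integral_killed_walk:
  assumes [measurable]: "f \<in> borel_measurable borel"
  shows "(\<integral>\<^sup>+ y. (\<Prod>k\<in>{1..n}. indicator {-a..a} ((\<Sum>i<k. y i) - real k * c)) * f ((\<Sum>i<n. y i) - real n * c)
    \<partial>iid_std_normal n) = (drift_op a c ^^ n) f 0"
  using assms
proof (induction n arbitrary: f)
  case (Suc n)
  note [measurable] = Suc.prems
  let ?S = "\<lambda>y k. (\<Sum>i<k. y i) - real k * c"
  let ?Q = "\<lambda>y. (\<Prod>k\<in>{1..Suc n}. indicator {-a..a} (?S y k) :: ennreal) * f (?S y (Suc n))"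
  have "?Q \<in> borel_measurable (iid_std_normal (Suc n))"
    by (rule borel_measurable_killed_walk) measurable
  then have "(\<integral>\<^sup>+ y. ?Q y \<partial>iid_std_normal (Suc n))
      = (\<integral>\<^sup>+ x. \<integral>\<^sup>+ t. ?Q (x(n := t)) \<partial>std_normal_distribution \<partial>iid_std_normal n)"
    by (rule nn_integral_iid_std_normal_insert)
  also have "\<dots> = (\<integral>\<^sup>+ x. (\<Prod>k\<in>{1..n}. indicator {-a..a} (?S x k)) * drift_op a c f (?S x n) \<partial>iid_std_normal n)"
  proof (intro nn_integral_cong)
    fix x :: "nat \<Rightarrow> real"
    have "?Q (x(n := t)) = (\<Prod>k\<in>{1..n}. indicator {-a..a} (?S x k))
        * (indicator {-a..a} (?S x n + t - c) * f (?S x n + t - c))" for t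
    proof -
      have init: "(\<Prod>k\<in>{1..n}. indicator {-a..a} (?S (x(n := t)) k) :: ennreal)
          = (\<Prod>k\<in>{1..n}. indicator {-a..a} (?S x k))"
        by (intro prod.cong) (simp_all only: atLeastAtMost_iff sum_lessThan_fun_upd)
      have last: "?S (x(n := t)) (Suc n) = ?S x n + t - c"
        using sum_lessThan_fun_upd[of n n x t] by (simp add: algebra_simps)
      have split: "(\<Prod>k\<in>{1..Suc n}. h k) = (\<Prod>k\<in>{1..n}. h k) * h (Suc n)" for h :: "nat \<Rightarrow> ennreal"
        by (simp add: prod.nat_ivl_Suc' mult.commute)
      show ?thesis
        by (subst split) (simp only: init last mult.assoc)
    qed
    then show "(\<integral>\<^sup>+ t. ?Q (x(n := t)) \<partial>std_normal_distribution)
        = (\<Prod>k\<in>{1..n}. indicator {-a..a} (?S x k)) * drift_op a c f (?S x n)"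
      unfolding drift_op_def by (simp only:) (rule nn_integral_cmult, measurable)
  qed
  also have "\<dots> = (drift_op a c ^^ n) (drift_op a c f) 0"
    by (rule Suc.IH) measurable
  also have "\<dots> = (drift_op a c ^^ Suc n) f 0"
    by (simp add: funpow_Suc_right del: funpow.simps)
  finally show ?case .
qed (simp add: iid_std_normal_def PiM_empty)

lemma std_normal_density_shift:
  "exp (- c * x) * std_normal_density (z - (x - c)) = exp (- c\<^sup>2 / 2) * (normal_density x 1 z * exp (- c * z))"
proof -
  have "- c * x + - (z - (x - c))\<^sup>2 / 2 = - c\<^sup>2 / 2 + (- (z - x)\<^sup>2 / 2 + - c * z)"
    by (simp add: power2_eq_square field_simps)
  then have "exp (- c * x) * exp (- (z - (x - c))\<^sup>2 / 2) = exp (- c\<^sup>2 / 2) * (exp (- (z - x)\<^sup>2 / 2) * exp (- c * z))"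
    by (simp flip: exp_add)
  then show ?thesis
    by (simp add: normal_density_def std_normal_density_def)
qed

text \<open>Exponential tilting (Cameron--Martin) removes the drift.\<close>

lemma drift_op_tilt:
  assumes [measurable]: "f \<in> borel_measurable borel"
  shows "ennreal (exp (- c * x)) * drift_op a c f x
    = ennreal (exp (- c\<^sup>2 / 2)) * killed_op a 1 (\<lambda>z. ennreal (exp (- c * z)) * f z) x"
proof -
  have "drift_op a c f x = (\<integral>\<^sup>+ t. (\<lambda>v. indicator {-a..a} v * f v) ((x - c) + t) \<partial>std_normal_distribution)"
    unfolding drift_op_def by (simp add: algebra_simps)
  also have "\<dots> = (\<integral>\<^sup>+ z. ennreal (std_normal_density (z - (x - c))) * (indicator {-a..a} z * f z) \<partial>lborel)"
    by (rule nn_integral_std_normal_translate) measurable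
  finally have "ennreal (exp (- c * x)) * drift_op a c f x
      = (\<integral>\<^sup>+ z. ennreal (exp (- c * x)) * (ennreal (std_normal_density (z - (x - c))) * (indicator {-a..a} z * f z)) \<partial>lborel)"
    by (simp add: nn_integral_cmult[symmetric] normal_density_def)
  also have "\<dots> = (\<integral>\<^sup>+ z. ennreal (exp (- c\<^sup>2 / 2))
      * (indicator {-a..a} z * ennreal (normal_density x 1 z) * (ennreal (exp (- c * z)) * f z)) \<partial>lborel)"
  proof (intro nn_integral_cong)
    fix z
    have "ennreal (exp (- c * x)) * ennreal (std_normal_density (z - (x - c)))
        = ennreal (exp (- c\<^sup>2 / 2)) * (ennreal (normal_density x 1 z) * ennreal (exp (- c * z)))"
      using std_normal_density_shift[of c x z] by (simp add: ennreal_mult[symmetric])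
    then show "ennreal (exp (- c * x)) * (ennreal (std_normal_density (z - (x - c))) * (indicator {-a..a} z * f z))
        = ennreal (exp (- c\<^sup>2 / 2)) * (indicator {-a..a} z * ennreal (normal_density x 1 z) * (ennreal (exp (- c * z)) * f z))"
      by (simp only: mult.assoc[symmetric]) (simp only: ac_simps)
  qed
  also have "\<dots> = ennreal (exp (- c\<^sup>2 / 2)) * killed_op a 1 (\<lambda>z. ennreal (exp (- c * z)) * f z) x"
    unfolding killed_op_def by (rule nn_integral_cmult) (unfold normal_density_def, measurable)
  finally show ?thesis .
qed

lemma funpow_drift_op_tilt:
  assumes [measurable]: "f \<in> borel_measurable borel"
  shows "ennreal (exp (- c * x)) * (drift_op a c ^^ n) f x
    = ennreal (exp (- real n * c\<^sup>2 / 2)) * (killed_op a 1 ^^ n) (\<lambda>z. ennreal (exp (- c * z)) * f z) x"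
proof (induction n arbitrary: x)
  case (Suc n)
  let ?h = "\<lambda>z. ennreal (exp (- c * z)) * f z"
  have h: "?h \<in> borel_measurable borel"
    by measurable
  have "ennreal (exp (- c * x)) * (drift_op a c ^^ Suc n) f x
      = ennreal (exp (- c\<^sup>2 / 2)) * killed_op a 1 (\<lambda>z. ennreal (exp (- c * z)) * (drift_op a c ^^ n) f z) x"
    using drift_op_tilt[OF borel_measurable_funpow_drift_op[OF assms]] by simp
  also have "\<dots> = ennreal (exp (- c\<^sup>2 / 2))
      * killed_op a 1 (\<lambda>z. ennreal (exp (- real n * c\<^sup>2 / 2)) * (killed_op a 1 ^^ n) ?h z) x"
    by (simp only: Suc.IH)
  also have "\<dots> = ennreal (exp (- c\<^sup>2 / 2)) * (ennreal (exp (- real n * c\<^sup>2 / 2))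
      * (killed_op a 1 ^^ Suc n) ?h x)"
    using killed_op_cmult[OF borel_measurable_funpow_killed_op[OF h]] by simp
  also have "\<dots> = ennreal (exp (- real (Suc n) * c\<^sup>2 / 2)) * (killed_op a 1 ^^ Suc n) ?h x"
  proof -
    have "exp (- c\<^sup>2 / 2) * exp (- real n * c\<^sup>2 / 2) = exp (- real (Suc n) * c\<^sup>2 / 2)"
      by (simp add: exp_add[symmetric] algebra_simps)
    then show ?thesis
      by (simp add: mult.assoc[symmetric] ennreal_mult[symmetric])
  qed
  finally show ?case .
qed simp

lemma nn_integral_iid_std_normal_Suc:
  fixes G :: "(nat \<Rightarrow> real) \<Rightarrow> real \<Rightarrow> ennreal"
  assumes G_pair: "(\<lambda>(x, s). G x s) \<in> borel_measurable (iid_std_normal n \<Otimes>\<^sub>M lborel)"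
    and G_Suc: "(\<lambda>y. G y (\<Sum>i<Suc n. y i)) \<in> borel_measurable (iid_std_normal (Suc n))"
    and G_upd: "\<And>x t s. G (x(n := t)) s = G x s"
  shows "(\<integral>\<^sup>+ y. G y (\<Sum>i<Suc n. y i) \<partial>iid_std_normal (Suc n))
    = (\<integral>\<^sup>+ s. \<integral>\<^sup>+ x. ennreal (std_normal_density (s - (\<Sum>i<n. x i))) * G x s \<partial>iid_std_normal n \<partial>lborel)"
proof -
  interpret pair_sigma_finite "iid_std_normal n" lborel
    by (simp add: pair_sigma_finite_def prob_space_imp_sigma_finite prob_space_iid_std_normal
        lborel.sigma_finite_measure_axioms)
  have "(\<integral>\<^sup>+ y. G y (\<Sum>i<Suc n. y i) \<partial>iid_std_normal (Suc n))
      = (\<integral>\<^sup>+ x. \<integral>\<^sup>+ t. G (x(n := t)) (\<Sum>i<Suc n. (x(n := t)) i) \<partial>std_normal_distribution \<partial>iid_std_normal n)"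
    using G_Suc by (rule nn_integral_iid_std_normal_insert)
  also have "\<dots> = (\<integral>\<^sup>+ x. \<integral>\<^sup>+ s. ennreal (std_normal_density (s - (\<Sum>i<n. x i))) * G x s \<partial>lborel \<partial>iid_std_normal n)"
  proof (intro nn_integral_cong)
    fix x assume "x \<in> space (iid_std_normal n)"
    then have [measurable]: "G x \<in> borel_measurable borel"
      using measurable_Pair2[OF G_pair] by simp
    have "(\<Sum>i<Suc n. (x(n := t)) i) = (\<Sum>i<n. x i) + t" for t
      using sum_lessThan_fun_upd[of n n x t] by simp
    then show "(\<integral>\<^sup>+ t. G (x(n := t)) (\<Sum>i<Suc n. (x(n := t)) i) \<partial>std_normal_distribution)
        = (\<integral>\<^sup>+ s. ennreal (std_normal_density (s - (\<Sum>i<n. x i))) * G x s \<partial>lborel)"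
      by (simp add: G_upd nn_integral_std_normal_translate)
  qed
  also have "\<dots> = (\<integral>\<^sup>+ s. \<integral>\<^sup>+ x. ennreal (std_normal_density (s - (\<Sum>i<n. x i))) * G x s \<partial>iid_std_normal n \<partial>lborel)"
  proof (rule Fubini'[symmetric])
    have "(\<lambda>p. \<Sum>i<n. fst p i) \<in> borel_measurable (iid_std_normal n \<Otimes>\<^sub>M lborel)"
      using measurable_compose[OF measurable_fst[of _ lborel] borel_measurable_partial_sum[of n n]]
      by (simp add: comp_def)
    then show "(\<lambda>(x, s). ennreal (std_normal_density (s - (\<Sum>i<n. x i))) * G x s)
        \<in> borel_measurable (iid_std_normal n \<Otimes>\<^sub>M lborel)"
      using G_pair unfolding normal_density_def by measurable
  qed
  finally show ?thesis .
qed

definition bridge_event :: "nat \<Rightarrow> real \<Rightarrow> (nat \<Rightarrow> real) set" where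
  "bridge_event N a = {y \<in> space (iid_std_normal N).
     \<forall>k\<in>{1..<N}. \<bar>(\<Sum>i<k. y i) - real k / real N * (\<Sum>i<N. y i)\<bar> \<le> a}"

text \<open>The bridge constraint in terms of the first \<open>n\<close> steps \<open>x\<close> and the total \<open>s\<close> of all \<open>n + 1\<close> steps.\<close>

definition bridge_indicator :: "nat \<Rightarrow> real \<Rightarrow> (nat \<Rightarrow> real) \<Rightarrow> real \<Rightarrow> ennreal" where
  "bridge_indicator n a x s = (\<Prod>k\<in>{1..n}. indicator {-a..a} ((\<Sum>i<k. x i) - real k / real (Suc n) * s))"

lemma borel_measurable_bridge:
  assumes "k \<le> N"
  shows "(\<lambda>y. (\<Sum>i<k. y i) - real k / real N * (\<Sum>i<N. y i)) \<in> borel_measurable (iid_std_normal N)"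
  using borel_measurable_partial_sum[OF assms] borel_measurable_partial_sum[of N N] by simp

lemma sets_bridge_event: "bridge_event N a \<in> sets (iid_std_normal N)"
  unfolding bridge_event_def
proof (intro sets.sets_Collect_finite_All)
  fix k assume "k \<in> {1..<N}"
  then have "k \<le> N"
    by simp
  from borel_measurable_bridge[OF this]
  show "{y \<in> space (iid_std_normal N). \<bar>(\<Sum>i<k. y i) - real k / real N * (\<Sum>i<N. y i)\<bar> \<le> a}
      \<in> sets (iid_std_normal N)"
    by measurable
qed simp

lemma borel_measurable_bridge_indicator_pair:
  "(\<lambda>(x, s). bridge_indicator n a x s) \<in> borel_measurable (iid_std_normal n \<Otimes>\<^sub>M lborel)"
proof -
  have "(\<lambda>p. (\<Sum>i<k. fst p i) - real k / real (Suc n) * snd p) \<in> borel_measurable (iid_std_normal n \<Otimes>\<^sub>M lborel)"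
    if "k \<le> n" for k
  proof -
    have "(\<lambda>p. \<Sum>i<k. fst p i) \<in> borel_measurable (iid_std_normal n \<Otimes>\<^sub>M lborel)"
      using measurable_compose[OF measurable_fst[of _ lborel] borel_measurable_partial_sum[OF that]]
      by (simp add: comp_def)
    then show ?thesis
      by (intro borel_measurable_diff borel_measurable_times measurable_snd[THEN measurable_compose]) auto
  qed
  from measurable_compose[OF this borel_measurable_indicator[of "{-a..a}"]]
  show ?thesis
    unfolding bridge_indicator_def case_prod_beta' by (intro borel_measurable_prod_ennreal) (auto simp: comp_def)
qed

lemma prod_indicator_eq_if:
  assumes "finite S"
  shows "(\<Prod>k\<in>S. indicator (B k) (g k) :: ennreal) = (if \<forall>k\<in>S. g k \<in> B k then 1 else 0)"
  using assms by (induction S rule: finite_induct) (auto simp: indicator_def)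

lemma indicator_bridge_event:
  assumes "y \<in> space (iid_std_normal (Suc n))"
  shows "indicator (bridge_event (Suc n) a) y = bridge_indicator n a y (\<Sum>i<Suc n. y i)"
proof -
  have "\<bar>r\<bar> \<le> a \<longleftrightarrow> r \<in> {-a..a}" for r :: real
    by auto
  then show ?thesis
    using assms unfolding bridge_indicator_def bridge_event_def atLeastLessThanSuc_atLeastAtMost
    by (subst prod_indicator_eq_if) (simp_all add: indicator_def)
qed

lemma nn_integral_bridge_indicator:
  "(\<integral>\<^sup>+ x. ennreal (std_normal_density (s - (\<Sum>i<n. x i))) * bridge_indicator n a x s \<partial>iid_std_normal n)
    = ennreal (exp (- s\<^sup>2 / (2 * real (Suc n)))) * (killed_op a 1 ^^ n) (\<lambda>z. ennreal (std_normal_density z)) 0"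
proof -
  define c where "c = s / real (Suc n)"
  have s: "s = real (Suc n) * c"
    by (simp add: c_def)
  define f where "f v = ennreal (std_normal_density (c - v))" for v
  have f [measurable]: "f \<in> borel_measurable borel"
    unfolding f_def normal_density_def by measurable
  have tilted: "ennreal (exp (- c * z)) * f z = ennreal (exp (- c\<^sup>2 / 2)) * ennreal (std_normal_density z)" for z
    using std_normal_density_shift[of c z 0]
    by (simp add: f_def normal_density_commute[of z] ennreal_mult[symmetric])
  have "(\<integral>\<^sup>+ x. ennreal (std_normal_density (s - (\<Sum>i<n. x i))) * bridge_indicator n a x s \<partial>iid_std_normal n)
    = (\<integral>\<^sup>+ x. (\<Prod>k\<in>{1..n}. indicator {-a..a} ((\<Sum>i<k. x i) - real k * c)) * f ((\<Sum>i<n. x i) - real n * c)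
      \<partial>iid_std_normal n)"
  proof -
    have ks: "real k / real (Suc n) * s = real k * c" for k
      by (simp add: c_def)
    have sum: "s - (\<Sum>i<n. x i) = c - ((\<Sum>i<n. x i) - real n * c)" for x :: "nat \<Rightarrow> real"
      by (simp add: s algebra_simps)
    show ?thesis
      unfolding bridge_indicator_def ks sum f_def by (simp only: mult.commute)
  qed
  also have "\<dots> = ennreal (exp (- c * 0)) * (drift_op a c ^^ n) f 0"
    using nn_integral_killed_walk[OF f] by simp
  also have "\<dots> = ennreal (exp (- real n * c\<^sup>2 / 2)) * (killed_op a 1 ^^ n) (\<lambda>z. ennreal (exp (- c * z)) * f z) 0"
    by (rule funpow_drift_op_tilt) measurable
  also have "\<dots> = ennreal (exp (- real n * c\<^sup>2 / 2)) * ennreal (exp (- c\<^sup>2 / 2))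
      * (killed_op a 1 ^^ n) (\<lambda>z. ennreal (std_normal_density z)) 0"
    unfolding tilted by (subst funpow_killed_op_cmult) (unfold normal_density_def, measurable, simp add: mult.assoc)
  also have "ennreal (exp (- real n * c\<^sup>2 / 2)) * ennreal (exp (- c\<^sup>2 / 2)) = ennreal (exp (- s\<^sup>2 / (2 * real (Suc n))))"
    unfolding s by (simp add: ennreal_mult[symmetric] exp_add[symmetric] power2_eq_square field_simps)
  finally show ?thesis .
qed

lemma nn_integral_exp_neg_square:
  assumes "0 < v"
  shows "(\<integral>\<^sup>+ s. ennreal (exp (- s\<^sup>2 / (2 * v))) \<partial>lborel) = ennreal (sqrt (2 * pi * v))"
proof -
  have "exp (- s\<^sup>2 / (2 * v)) = sqrt (2 * pi * v) * normal_density 0 (sqrt v) s" for s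
    using assms by (simp add: normal_density_def real_sqrt_mult)
  then have "(\<integral>\<^sup>+ s. ennreal (exp (- s\<^sup>2 / (2 * v))) \<partial>lborel)
      = ennreal (sqrt (2 * pi * v)) * (\<integral>\<^sup>+ s. ennreal (normal_density 0 (sqrt v) s) \<partial>lborel)"
    using assms by (subst nn_integral_cmult[symmetric]) (auto simp: ennreal_mult)
  also have "(\<integral>\<^sup>+ s. ennreal (normal_density 0 (sqrt v) s) \<partial>lborel) = 1"
    using assms by (subst nn_integral_eq_integral) auto
  finally show ?thesis
    by simp
qed

lemma emeasure_bridge_event:
  "emeasure (iid_std_normal (Suc n)) (bridge_event (Suc n) a)
    = ennreal (sqrt (2 * pi * real (Suc n))) * (killed_op a 1 ^^ n) (\<lambda>z. ennreal (std_normal_density z)) 0"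
proof -
  have "(\<lambda>y. bridge_indicator n a y (\<Sum>i<Suc n. y i)) \<in> borel_measurable (iid_std_normal (Suc n))"
    by (rule measurable_cong[THEN iffD2, OF _ borel_measurable_indicator[OF sets_bridge_event]])
      (simp add: indicator_bridge_event)
  moreover have "bridge_indicator n a (x(n := t)) s = bridge_indicator n a x s" for x t s
    unfolding bridge_indicator_def by (intro prod.cong) (simp_all add: sum_lessThan_fun_upd)
  ultimately have "(\<integral>\<^sup>+ y. bridge_indicator n a y (\<Sum>i<Suc n. y i) \<partial>iid_std_normal (Suc n))
      = (\<integral>\<^sup>+ s. \<integral>\<^sup>+ x. ennreal (std_normal_density (s - (\<Sum>i<n. x i))) * bridge_indicator n a x s
        \<partial>iid_std_normal n \<partial>lborel)"
    using borel_measurable_bridge_indicator_pair by (intro nn_integral_iid_std_normal_Suc)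
  also have "\<dots> = (\<integral>\<^sup>+ s. ennreal (exp (- s\<^sup>2 / (2 * real (Suc n))))
      * (killed_op a 1 ^^ n) (\<lambda>z. ennreal (std_normal_density z)) 0 \<partial>lborel)"
    unfolding nn_integral_bridge_indicator ..
  also have "\<dots> = ennreal (sqrt (2 * pi * real (Suc n))) * (killed_op a 1 ^^ n) (\<lambda>z. ennreal (std_normal_density z)) 0"
    using nn_integral_exp_neg_square[of "real (Suc n)"] by (subst nn_integral_multc) auto
  finally show ?thesis
    by (simp add: nn_integral_indicator[symmetric] sets_bridge_event indicator_bridge_event
        cong: nn_integral_cong)
qed

lemma prob_bridge_event_ge:
  assumes "0 < a" and "0 < N"
  shows "exp (- (pi / (2 * a))\<^sup>2 / 2 * N) * sqrt (2 * pi * N) / (2 * a)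
    \<le> measure (iid_std_normal N) (bridge_event N a)"
proof -
  obtain n where N: "N = Suc n"
    using \<open>0 < N\<close> by (cases N) auto
  interpret prob_space "iid_std_normal N"
    by (rule prob_space_iid_std_normal)
  have "ennreal (sqrt (2 * pi * N)) * ennreal (exp (- (pi / (2 * a))\<^sup>2 / 2 * N) / (2 * a))
      \<le> emeasure (iid_std_normal N) (bridge_event N a)"
    unfolding N emeasure_bridge_event
    by (intro mult_left_mono funpow_killed_op_std_normal_ge \<open>0 < a\<close>) simp
  then show ?thesis
    using \<open>0 < a\<close> by (simp add: emeasure_eq_measure ennreal_mult[symmetric] mult.commute)
qed

section \<open>Window sums as bridge increments\<close>

lemma sum_upto_eq_diff:
  fixes f :: "nat \<Rightarrow> real"
  assumes "m \<le> p"
  shows "(\<Sum>i\<in>{m..<p}. f i) = (\<Sum>i<p. f i) - (\<Sum>i<m. f i)"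
  using sum.atLeastLessThan_concat[of 0 m p f] assms by (simp add: atLeast0LessThan)

lemma sum_mod_wraparound:
  fixes y :: "nat \<Rightarrow> real"
  assumes "j \<le> N" and "p \<le> N"
  shows "(\<Sum>i\<in>{j..<N + p}. y (i mod N)) = (\<Sum>i<N. y i) - (\<Sum>i<j. y i) + (\<Sum>i<p. y i)"
proof -
  have "(\<Sum>i\<in>{j..<N + p}. y (i mod N)) = (\<Sum>i\<in>{j..<N}. y (i mod N)) + (\<Sum>i\<in>{N..<N + p}. y (i mod N))"
    using assms by (intro sum.atLeastLessThan_concat[symmetric]) auto
  also have "(\<Sum>i\<in>{j..<N}. y (i mod N)) = (\<Sum>i<N. y i) - (\<Sum>i<j. y i)"
    using assms by (simp add: sum_upto_eq_diff[symmetric])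
  also have "(\<Sum>i\<in>{N..<N + p}. y (i mod N)) = (\<Sum>i<p. y i)"
  proof (cases "p = N")
    case False
    then show ?thesis
      using sum.shift_bounds_nat_ivl[of "\<lambda>i. y (i mod N)" 0 N p] assms
      by (simp add: add.commute atLeast0LessThan)
  qed (use sum.shift_bounds_nat_ivl[of "\<lambda>i. y (i mod N)" 0 N N] in \<open>simp add: atLeast0LessThan\<close>)
  finally show ?thesis .
qed

lemma window_sum_eq_bridge_diff:
  fixes y :: "nat \<Rightarrow> real" and N K j :: nat
  assumes "K < N" and "j < N"
  defines "T \<equiv> (\<Sum>i<N. y i)"
  defines "B \<equiv> \<lambda>k. (\<Sum>i<k. y i) - real k / real N * T"
  shows "\<exists>p q. p \<le> N \<and> q \<le> N \<and> (\<Sum>i=j..j+K. y (i mod N)) - real (K + 1) / real N * T = B p - B q"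
proof -
  have N: "0 < real N"
    using assms by simp
  have window: "{j..j+K} = {j..<j + (K + 1)}"
    by auto
  show ?thesis
  proof (cases "j + (K + 1) \<le> N")
    case True
    then have sum: "(\<Sum>i=j..j+K. y (i mod N)) = (\<Sum>i<j + (K + 1). y i) - (\<Sum>i<j. y i)"
      unfolding window by (simp add: sum_upto_eq_diff[symmetric])
    have "(\<Sum>i=j..j+K. y (i mod N)) - real (K + 1) / real N * T = B (j + (K + 1)) - B j"
      unfolding sum B_def using N by (simp add: field_simps)
    then show ?thesis
      using True \<open>j < N\<close> by (intro exI conjI) auto
  next
    case False
    define p where "p = j + (K + 1) - N"
    have p: "p \<le> N" "j + (K + 1) = N + p" and p_real: "real p = real j + real (K + 1) - real N"
      using False assms by (auto simp: p_def)
    have sum: "(\<Sum>i=j..j+K. y (i mod N)) = T - (\<Sum>i<j. y i) + (\<Sum>i<p. y i)"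
      unfolding window p(2) T_def using \<open>j < N\<close> p(1) by (intro sum_mod_wraparound) auto
    have "(\<Sum>i=j..j+K. y (i mod N)) - real (K + 1) / real N * T = B p - B j"
      unfolding sum B_def p_real using N by (simp add: field_simps)
    then show ?thesis
      using p(1) \<open>j < N\<close> by (intro exI conjI) auto
  qed
qed

lemma bridge_event_subset_G2_event:
  assumes "K < N"
  shows "bridge_event N (sqrt (real K + 1) / 2) \<subseteq> G2_event N K"
proof
  fix y assume y: "y \<in> bridge_event N (sqrt (real K + 1) / 2)"
  define T where "T = (\<Sum>i<N. y i)"
  define B where "B k = (\<Sum>i<k. y i) - real k / real N * T" for k
  have B: "\<bar>B k\<bar> \<le> sqrt (real K + 1) / 2" if "k \<le> N" for k
  proof (cases "k = 0 \<or> k = N")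
    case True
    then show ?thesis
      using assms by (auto simp: B_def T_def)
  next
    case False
    then show ?thesis
      using y that by (auto simp: bridge_event_def B_def T_def)
  qed
  have "\<bar>X_var N K y j\<bar> \<le> 1" if j: "j < N" for j
  proof -
    obtain p q where "p \<le> N" "q \<le> N"
      and window: "(\<Sum>i=j..j+K. y (i mod N)) - real (K + 1) / real N * T = B p - B q"
      using window_sum_eq_bridge_diff[OF assms j, of y] unfolding T_def B_def by blast
    have "(real K + 1) / sqrt (real N) * t_stat N y = real (K + 1) / real N * T"
      unfolding t_stat_def T_def using assms by (simp add: field_simps)
    then have "\<bar>X_var N K y j\<bar> = \<bar>B p - B q\<bar> / sqrt (real K + 1)"
      unfolding X_var_def window[symmetric] by (simp add: abs_divide)
    also have "\<dots> \<le> 1"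
      using B[OF \<open>p \<le> N\<close>] B[OF \<open>q \<le> N\<close>] by simp
    finally show ?thesis .
  qed
  then show "y \<in> G2_event N K"
    using y by (simp add: G2_event_def bridge_event_def)
qed

lemma G2_event_sets:
  assumes "0 < N"
  shows "G2_event N K \<in> sets (iid_std_normal N)"
proof -
  have "(\<lambda>y. X_var N K y j) \<in> borel_measurable (iid_std_normal N)" for j
  proof -
    have "(\<lambda>y. y (i mod N)) \<in> borel_measurable (iid_std_normal N)" for i
      using assms by (intro borel_measurable_iid_std_normal_component) simp
    then show ?thesis
      using borel_measurable_partial_sum[of N N] unfolding X_var_def t_stat_def by measurable
  qed
  moreover have "G2_event N K = {y \<in> space (iid_std_normal N). \<forall>j\<in>{..<N}. \<bar>X_var N K y j\<bar> \<le> 1}"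
    unfolding G2_event_def by auto
  ultimately show ?thesis
    by (simp add: sets.sets_Collect_finite_All)
qed

lemma exp_rate_le_bridge_bound:
  fixes K N :: nat
  assumes "1 \<le> K" and "K < N"
  shows "exp (- (pi\<^sup>2 / 2) * (real N / real K))
    \<le> exp (- (pi / sqrt (real K + 1))\<^sup>2 / 2 * N) * sqrt (2 * pi * N) / sqrt (real K + 1)"
proof -
  have "(pi / sqrt (real K + 1))\<^sup>2 / 2 * N \<le> pi\<^sup>2 / 2 * (real N / real K)"
    using assms by (simp add: power_divide frac_le)
  then have "exp (- (pi\<^sup>2 / 2) * (real N / real K)) \<le> exp (- (pi / sqrt (real K + 1))\<^sup>2 / 2 * N)"
    by simp
  moreover have "sqrt (real K + 1) \<le> sqrt (2 * pi * N)"
  proof (intro real_sqrt_le_mono)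
    have "real K + 1 \<le> 1 * real N"
      using assms by simp
    also have "\<dots> \<le> 2 * pi * real N"
      using pi_gt3 by (intro mult_right_mono) auto
    finally show "real K + 1 \<le> 2 * pi * real N" .
  qed
  ultimately show ?thesis
    by (simp add: le_divide_eq mult_mono)
qed

theorem lemma3p2:
  fixes N K :: nat
  assumes "K \<ge> 1" and "N \<ge> K + 2"
  shows "measure (iid_std_normal N) (G2_event N K) > 0 \<and>
         ln (measure (iid_std_normal N) (G2_event N K)) \<ge> - (pi\<^sup>2 / 2) * (real N / real K)"
proof -
  define a where "a = sqrt (real K + 1) / 2"
  have "0 < a" and "0 < N" and "K < N"
    using assms by (auto simp: a_def)
  interpret prob_space "iid_std_normal N"
    by (rule prob_space_iid_std_normal)
  have "exp (- (pi\<^sup>2 / 2) * (real N / real K)) \<le> exp (- (pi / (2 * a))\<^sup>2 / 2 * N) * sqrt (2 * pi * N) / (2 * a)"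
    using exp_rate_le_bridge_bound[OF \<open>K \<ge> 1\<close> \<open>K < N\<close>] by (simp add: a_def)
  also have "\<dots> \<le> prob (bridge_event N a)"
    using \<open>0 < a\<close> \<open>0 < N\<close> by (rule prob_bridge_event_ge)
  also have "\<dots> \<le> prob (G2_event N K)"
    using bridge_event_subset_G2_event[OF \<open>K < N\<close>] G2_event_sets[OF \<open>0 < N\<close>]
    by (intro finite_measure_mono) (simp_all add: a_def)
  finally have bound: "exp (- (pi\<^sup>2 / 2) * (real N / real K)) \<le> prob (G2_event N K)" .
  moreover have "0 < prob (G2_event N K)"
    using bound by (rule less_le_trans[OF exp_gt_zero])
  ultimately show ?thesis
    by (simp add: ln_ge_iff)
qed

end
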